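(* Let $z$ be a binomial random variable with parameters $n\ge1$ and $\nu\in[0,1]$. For any $c\ge1$ with $c\nu<1$ and any $\lambda\in\big[0,\frac{\ln c}{(1-c\nu)(4n-3)}\big]$, $\mathbb{E}e^{\lambda z^2}\le e^{cn\nu(1+cn\nu)\lambda}$. *)

theory Defs
  imports "HOL-Probability.Probability"
begin

end

theory Submission
  imports Defs
begin

(* Write g_t(k) = exp (lam k^2 + t k). Conditioning on the last trial gives
   E_{m+1} g_t = E_m [g_t(k) (1 - nu + nu e^(lam (2k+1) + t))], and the elementary bound
   1 - nu + nu e^a <= e^(c nu a) for 0 <= a <= ln c / (1 - c nu) turns this into
   e^(c nu (lam + t)) E_m g_(t + 2 c nu lam). Induction on m, with the tilt t as a free
   parameter, yields E_m g_t <= exp (c nu (m lam + m t + c nu lam m (m - 1))) whenever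
   lam (2m - 1) + t <= ln c / (1 - c nu); the theorem is the case t = 0, and its
   hypothesis with 4n - 3 is stronger than this requirement. *)

lemma expectation_binomial_pmf_Suc:
  fixes g :: "nat \<Rightarrow> real"
  assumes p: "p \<in> {0..1}"
  shows "measure_pmf.expectation (binomial_pmf (Suc n) p) g =
         measure_pmf.expectation (binomial_pmf n p) (\<lambda>k. (1 - p) * g k + p * g (Suc k))"
proof -
  have "binomial_pmf (Suc n) p =
      bernoulli_pmf p \<bind> (\<lambda>b. map_pmf (\<lambda>k. (if b then 1 else 0) + k) (binomial_pmf n p))"
    using p by (simp add: binomial_pmf_Suc map_pmf_def)
  also have "measure_pmf.expectation \<dots> g =
      (\<Sum>b\<in>UNIV. pmf (bernoulli_pmf p) b *\<^sub>R
         measure_pmf.expectation (binomial_pmf n p) (\<lambda>k. g ((if b then 1 else 0) + k)))"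
    using p by (subst pmf_expectation_bind[of UNIV]) (auto intro!: finite_imageI)
  also have "\<dots> = measure_pmf.expectation (binomial_pmf n p) (\<lambda>k. (1 - p) * g k + p * g (Suc k))"
    using p by (simp add: UNIV_bool)
  finally show ?thesis .
qed

lemma bernoulli_mgf_le_exp:
  fixes \<nu> c a :: real
  assumes "0 \<le> \<nu>" "c \<ge> 1" "c * \<nu> < 1" "0 \<le> a" "a \<le> ln c / (1 - c * \<nu>)"
  shows "1 - \<nu> + \<nu> * exp a \<le> exp (c * \<nu> * a)"
proof -
  define f where "f x = exp (c * \<nu> * x) - \<nu> * exp x" for x
  have "f 0 \<le> f a"
  proof (rule DERIV_nonneg_imp_nondecreasing[OF \<open>0 \<le> a\<close>])
    fix x assume x: "0 \<le> x" "x \<le> a"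
    have "(1 - c * \<nu>) * x \<le> (1 - c * \<nu>) * a"
      using x assms by (intro mult_left_mono) auto
    also have "\<dots> \<le> ln c"
      using assms by (simp add: le_divide_eq mult.commute)
    finally have "(1 - c * \<nu>) * x \<le> ln c" .
    hence "exp ((1 - c * \<nu>) * x) \<le> c"
      using \<open>c \<ge> 1\<close> by (metis exp_le_cancel_iff exp_ln less_le_trans zero_less_one)
    hence "exp (c * \<nu> * x) * exp ((1 - c * \<nu>) * x) \<le> exp (c * \<nu> * x) * c"
      by simp
    hence "exp x \<le> c * exp (c * \<nu> * x)"
      by (simp add: mult_exp_exp algebra_simps)
    hence "0 \<le> c * \<nu> * exp (c * \<nu> * x) - \<nu> * exp x"
      using \<open>0 \<le> \<nu>\<close> by (simp add: mult_left_mono mult.assoc mult.left_commute)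
    moreover have "DERIV f x :> c * \<nu> * exp (c * \<nu> * x) - \<nu> * exp x"
      unfolding f_def by (auto intro!: derivative_eq_intros)
    ultimately show "\<exists>y. DERIV f x :> y \<and> 0 \<le> y" by blast
  qed
  thus ?thesis by (simp add: f_def)
qed

lemma set_pmf_binomial_le:
  "p \<in> {0..1} \<Longrightarrow> k \<in> set_pmf (binomial_pmf n p) \<Longrightarrow> k \<le> n"
  by (auto simp: set_pmf_binomial_eq split: if_splits)

lemma expectation_binomial_exp_square_le:
  fixes \<nu> c lam t :: real
  assumes \<nu>: "0 \<le> \<nu>" "\<nu> \<le> 1" and c: "c \<ge> 1" "c * \<nu> < 1" and lam: "0 \<le> lam"
    and "0 \<le> t" and "lam * (2 * real m - 1) + t \<le> ln c / (1 - c * \<nu>)"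
  shows "measure_pmf.expectation (binomial_pmf m \<nu>) (\<lambda>k. exp (lam * (real k)\<^sup>2 + t * real k))
           \<le> exp (c * \<nu> * (real m * lam + real m * t + c * \<nu> * lam * real m * (real m - 1)))"
  using assms(6,7)
proof (induction m arbitrary: t)
  case 0
  then show ?case using \<nu> by (simp add: binomial_pmf_0)
next
  case (Suc m)
  define g where "g s k = exp (lam * (real k)\<^sup>2 + s * real k)" for s k
  define E where "E f = measure_pmf.expectation (binomial_pmf m \<nu>) f" for f :: "nat \<Rightarrow> real"
  have \<nu>01: "\<nu> \<in> {0..1}" using \<nu> by simp
  have "measure_pmf.expectation (binomial_pmf (Suc m) \<nu>) (g t)
      = E (\<lambda>k. (1 - \<nu>) * g t k + \<nu> * g t (Suc k))"
    unfolding E_def using \<nu>01 by (rule expectation_binomial_pmf_Suc)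
  also have "\<dots> = E (\<lambda>k. g t k * (1 - \<nu> + \<nu> * exp (lam * (2 * real k + 1) + t)))"
    unfolding E_def g_def
    by (intro Bochner_Integration.integral_cong refl)
       (simp add: mult_exp_exp power2_eq_square algebra_simps)
  also have "\<dots> \<le> E (\<lambda>k. g t k * exp (c * \<nu> * (lam * (2 * real k + 1) + t)))"
    unfolding E_def
  proof (intro integral_mono_AE AE_pmfI mult_left_mono)
    fix k assume "k \<in> set_pmf (binomial_pmf m \<nu>)"
    hence "k \<le> m" by (rule set_pmf_binomial_le[OF \<nu>01])
    hence "lam * (2 * real k + 1) \<le> lam * (2 * real (Suc m) - 1)"
      using lam by (intro mult_left_mono) auto
    thus "1 - \<nu> + \<nu> * exp (lam * (2 * real k + 1) + t)
        \<le> exp (c * \<nu> * (lam * (2 * real k + 1) + t))"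
      using Suc.prems \<nu> c lam by (intro bernoulli_mgf_le_exp) auto
  qed (use \<nu>01 in \<open>auto simp: g_def\<close>)
  also have "\<dots> = exp (c * \<nu> * (lam + t)) * E (g (t + 2 * c * \<nu> * lam))"
    unfolding E_def g_def
    by (subst integral_mult_right_zero[symmetric], intro Bochner_Integration.integral_cong refl)
       (simp add: mult_exp_exp algebra_simps)
  also have "\<dots> \<le> exp (c * \<nu> * (lam + t)) * exp (c * \<nu> * (real m * lam
      + real m * (t + 2 * c * \<nu> * lam) + c * \<nu> * lam * real m * (real m - 1)))"
  proof (intro mult_left_mono)
    have "c * \<nu> * lam \<le> lam" using \<nu> c lam by (simp add: mult_left_le_one_le)
    thus "E (g (t + 2 * c * \<nu> * lam)) \<le> exp (c * \<nu> * (real m * lam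
        + real m * (t + 2 * c * \<nu> * lam) + c * \<nu> * lam * real m * (real m - 1)))"
      unfolding E_def g_def using Suc.prems \<nu> c lam by (intro Suc.IH) (auto simp: algebra_simps)
  qed simp
  also have "\<dots> = exp (c * \<nu> * (real (Suc m) * lam + real (Suc m) * t
      + c * \<nu> * lam * real (Suc m) * (real (Suc m) - 1)))"
    by (simp add: mult_exp_exp algebra_simps)
  finally show ?case unfolding g_def .
qed

theorem lemma7:
  fixes n :: nat and \<nu> c lam :: real
  assumes "n \<ge> 1"
    and "0 \<le> \<nu>" and "\<nu> \<le> 1"
    and "c \<ge> 1" and "c * \<nu> < 1"
    and "0 \<le> lam"
    and "lam \<le> ln c / ((1 - c * \<nu>) * (4 * real n - 3))"
  shows "measure_pmf.expectation (binomial_pmf n \<nu>) (\<lambda>z. exp (lam * (real z)\<^sup>2))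
           \<le> exp (c * real n * \<nu> * (1 + c * real n * \<nu>) * lam)"
proof -
  have "lam * (2 * real n - 1) \<le> lam * (4 * real n - 3)"
    using assms by (intro mult_left_mono) auto
  also have "\<dots> \<le> ln c / (1 - c * \<nu>)"
    using assms by (simp add: le_divide_eq mult.commute mult.left_commute)
  finally have "measure_pmf.expectation (binomial_pmf n \<nu>) (\<lambda>k. exp (lam * (real k)\<^sup>2 + 0 * real k))
      \<le> exp (c * \<nu> * (real n * lam + real n * 0 + c * \<nu> * lam * real n * (real n - 1)))"
    using assms by (intro expectation_binomial_exp_square_le) auto
  also have "\<dots> \<le> exp (c * real n * \<nu> * (1 + c * real n * \<nu>) * lam)"
    using assms by (simp add: algebra_simps)
  finally show ?thesis by simp
qed

end
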